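(* Let $D_K$ be a relative $K$-entropy satisfying Properties (a), (b), (c) and (d) below, and let $H_K$ be the associated conditional entropy, defined by one of the two forms below. Then (i) $H_K(A|B)=0$ for every state of the form $\rho_{AB}=|\psi\rangle\langle\psi|_A\otimes\rho_B$ with $|\psi\rangle$ a unit vector; and (ii) $H_K(A|B)\le\log d_A$ for every density operator $\rho_{AB}$, where $d_A=\dim\mathcal{H}_A$.
   Context: All Hilbert spaces are finite-dimensional; $\log$ has an arbitrary but fixed base. A relative $K$-entropy $D_K$ assigns to every pair $(S,T)$ of positive semidefinite operators on a common Hilbert space an extended real number $D_K(S\|T)$. Properties: (a) for every trace-preserving completely positive map $\mathcal{E}$ (possibly between different spaces), $D_K(\mathcal{E}(S)\|\mathcal{E}(T))\le D_K(S\|T)$; (b) for positive semidefinite $S,T$ on $\mathcal{H}$ and $T'$ on $\mathcal{H}'$, $D_K(S\oplus 0\,\|\,T\oplus T')=D_K(S\|T)$; (c) for every constant $c>0$, $D_K(S\|cT)=D_K(S\|T)+\log\frac1c$; (d) $D_K(\rho\|\rho)=0$ for every density operator $\rho$. The conditional $K$-entropy of a density operator $\rho_{AB}$ is either $H_K(A|B)=-D_K(\rho_{AB}\|\mathbb{1}_A\otimes\rho_B)$ for all $\rho_{AB}$, or $H_K(A|B)=\max_{\sigma_B}[-D_K(\rho_{AB}\|\mathbb{1}_A\otimes\sigma_B)]$ for all $\rho_{AB}$, maximum over density operators $\sigma_B$. *)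

theory Defs
  imports Complex_Main "HOL-Library.Extended_Real" "Jordan_Normal_Form.Matrix"
begin

definition psd :: "nat \<Rightarrow> complex mat \<Rightarrow> bool" where
  "psd n A \<longleftrightarrow> A \<in> carrier_mat n n \<and>
     (\<forall>v \<in> carrier_vec n.
        (let q = (\<Sum>i<n. \<Sum>j<n. cnj (v $ i) * A $$ (i, j) * v $ j)
         in Im q = 0 \<and> Re q \<ge> 0))"

definition mtrace :: "complex mat \<Rightarrow> complex" where
  "mtrace A = (\<Sum>i<dim_row A. A $$ (i, i))"

definition density :: "nat \<Rightarrow> complex mat \<Rightarrow> bool" where
  "density n \<rho> \<longleftrightarrow> psd n \<rho> \<and> mtrace \<rho> = 1"

text \<open>Kronecker (tensor) product, first factor's index is the major one.\<close>
definition kron :: "complex mat \<Rightarrow> complex mat \<Rightarrow> complex mat" where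
  "kron A B = mat (dim_row A * dim_row B) (dim_col A * dim_col B)
     (\<lambda>(i, j). A $$ (i div dim_row B, j div dim_col B) * B $$ (i mod dim_row B, j mod dim_col B))"

definition dsum :: "complex mat \<Rightarrow> complex mat \<Rightarrow> complex mat" where
  "dsum S T = four_block_mat S (0\<^sub>m (dim_row S) (dim_col T)) (0\<^sub>m (dim_row T) (dim_col S)) T"

definition blk :: "nat \<Rightarrow> complex mat \<Rightarrow> nat \<Rightarrow> nat \<Rightarrow> complex mat" where
  "blk n Y a b = mat n n (\<lambda>(p, q). Y $$ (a * n + p, b * n + q))"

text \<open>(id_k tensor E) applied to a (k n) x (k n) matrix, E mapping n x n to m x m matrices.\<close>
definition ampl :: "nat \<Rightarrow> nat \<Rightarrow> nat \<Rightarrow> (complex mat \<Rightarrow> complex mat) \<Rightarrow> complex mat \<Rightarrow> complex mat" where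
  "ampl k n m E Y = mat (k * m) (k * m)
     (\<lambda>(i, j). E (blk n Y (i div m) (j div m)) $$ (i mod m, j mod m))"

definition cptp :: "nat \<Rightarrow> nat \<Rightarrow> (complex mat \<Rightarrow> complex mat) \<Rightarrow> bool" where
  "cptp n m E \<longleftrightarrow>
     (\<forall>X \<in> carrier_mat n n. E X \<in> carrier_mat m m) \<and>
     (\<forall>X \<in> carrier_mat n n. \<forall>Y \<in> carrier_mat n n. E (X + Y) = E X + E Y) \<and>
     (\<forall>c. \<forall>X \<in> carrier_mat n n. E (c \<cdot>\<^sub>m X) = c \<cdot>\<^sub>m E X) \<and>
     (\<forall>X \<in> carrier_mat n n. mtrace (E X) = mtrace X) \<and>
     (\<forall>k. \<forall>Y. psd (k * n) Y \<longrightarrow> psd (k * m) (ampl k n m E Y))"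

text \<open>Axioms (a)-(d) of a relative K-entropy with logarithm base b.
  D is only constrained on pairs of PSD operators on a common (nonzero) space.\<close>
definition rel_K_entropy :: "real \<Rightarrow> (complex mat \<Rightarrow> complex mat \<Rightarrow> ereal) \<Rightarrow> bool" where
  "rel_K_entropy b D \<longleftrightarrow>
     (\<forall>n m E S T. 0 < n \<longrightarrow> cptp n m E \<longrightarrow> psd n S \<longrightarrow> psd n T \<longrightarrow>
         D (E S) (E T) \<le> D S T) \<and>
     (\<forall>n m S T T'. 0 < n \<longrightarrow> psd n S \<longrightarrow> psd n T \<longrightarrow> psd m T' \<longrightarrow>
         D (dsum S (0\<^sub>m m m)) (dsum T T') = D S T) \<and>
     (\<forall>n S T (c::real). 0 < n \<longrightarrow> psd n S \<longrightarrow> psd n T \<longrightarrow> c > 0 \<longrightarrow>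
         D S (complex_of_real c \<cdot>\<^sub>m T) = D S T + ereal (log b (1 / c))) \<and>
     (\<forall>n \<rho>. density n \<rho> \<longrightarrow> D \<rho> \<rho> = 0)"

definition ptrace_A :: "nat \<Rightarrow> nat \<Rightarrow> complex mat \<Rightarrow> complex mat" where
  "ptrace_A dA dB \<rho> = mat dB dB (\<lambda>(i, j). \<Sum>a<dA. \<rho> $$ (a * dB + i, a * dB + j))"

definition condK1 :: "(complex mat \<Rightarrow> complex mat \<Rightarrow> ereal) \<Rightarrow> nat \<Rightarrow> nat \<Rightarrow> complex mat \<Rightarrow> ereal" where
  "condK1 D dA dB \<rho> = - D \<rho> (kron (1\<^sub>m dA) (ptrace_A dA dB \<rho>))"

definition condK2 :: "(complex mat \<Rightarrow> complex mat \<Rightarrow> ereal) \<Rightarrow> nat \<Rightarrow> nat \<Rightarrow> complex mat \<Rightarrow> ereal" where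
  "condK2 D dA dB \<rho> = (SUP \<sigma> \<in> {\<sigma>. density dB \<sigma>}. - D \<rho> (kron (1\<^sub>m dA) \<sigma>))"

definition ketbra :: "complex vec \<Rightarrow> complex mat" where
  "ketbra \<psi> = mat (dim_vec \<psi>) (dim_vec \<psi>) (\<lambda>(i, j). \<psi> $ i * cnj (\<psi> $ j))"

end

theory Submission
  imports Defs
begin

text \<open>Both parts follow from data processing (a) along channels that collapse the operators to
  1 x 1 or diagonal 2 x 2 matrices, on which (b), (c) and (d) determine D.
  For (ii), the trace channel maps \<rho> to 1 and 1 \<otimes> \<sigma> to d_A, so
  D(\<rho> || 1 \<otimes> \<sigma>) \<ge> D(1 || d_A) = log (1/d_A).
  For (i), let S = |\<psi>\<rangle>\<langle>\<psi>| \<otimes> \<rho>. Tracing out the block index of S \<oplus> 0 and T \<oplus> T' shows with (b)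
  that D is antitone in its second argument; since 1 \<otimes> \<rho> = S + (1 - |\<psi>\<rangle>\<langle>\<psi>|) \<otimes> \<rho>, this gives
  D(S || 1 \<otimes> \<rho>) \<le> D(S || S) = 0. Conversely, measuring {|\<psi>\<rangle>\<langle>\<psi>|, 1 - |\<psi>\<rangle>\<langle>\<psi>|} on A and
  discarding B maps S to 1 \<oplus> 0 and 1 \<otimes> \<sigma> to 1 \<oplus> c with c \<ge> 0, so
  D(S || 1 \<otimes> \<sigma>) \<ge> D(1 || 1) = 0.\<close>

lemma sum_nat_mult_split:
  fixes f :: "nat \<Rightarrow> 'a::comm_monoid_add"
  shows "(\<Sum>i<a * b. f i) = (\<Sum>x<a. \<Sum>y<b. f (x * b + y))"
proof (induction a)
  case (Suc a)
  have "{..<Suc a * b} = {..<a * b} \<union> {a * b..<a * b + b}" by auto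
  then have "(\<Sum>i<Suc a * b. f i) = (\<Sum>i<a * b. f i) + (\<Sum>i\<in>{a * b..<a * b + b}. f i)"
    by (simp add: sum.union_disjoint ivl_disj_int)
  also have "(\<Sum>i\<in>{a * b..<a * b + b}. f i) = (\<Sum>y<b. f (a * b + y))"
    using sum.shift_bounds_nat_ivl[of f 0 "a * b" b] by (simp add: atLeast0LessThan add.commute)
  finally show ?case using Suc by simp
qed simp

lemma sum_nat_add_split:
  fixes f :: "nat \<Rightarrow> 'a::comm_monoid_add"
  shows "(\<Sum>i<n + m. f i) = (\<Sum>i<n. f i) + (\<Sum>i<m. f (n + i))"
  by (induction m) (simp_all add: ac_simps)

lemma sum_rotate3:
  "(\<Sum>x\<in>A. \<Sum>y\<in>B. \<Sum>z\<in>C. f x y z) = (\<Sum>z\<in>C. \<Sum>x\<in>A. \<Sum>y\<in>B. f x y z)"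
  by (subst sum.swap) (simp only: sum.swap[of _ B])

lemma sum_cartesian3: "(\<Sum>y\<in>A \<times> B \<times> C. f y) = (\<Sum>x\<in>A. \<Sum>r\<in>B. \<Sum>p\<in>C. f (x, r, p))"
  by (simp add: sum.cartesian_product)

lemma sum_if_const: "(\<Sum>b\<in>B. if P then f b else 0) = (if P then sum f B else 0)"
  by simp

lemma sum_delta2:
  assumes "finite A" "finite B" "a \<in> A" "b \<in> B"
  shows "(\<Sum>i\<in>A. \<Sum>j\<in>B. if i = a then (if j = b then g i j else 0) else 0) = g a b"
  using assms by (simp add: sum_if_const)

lemma mult_add_less_mult:
  fixes r s :: nat
  assumes "r < dA" "s < dB"
  shows "r * dB + s < dA * dB"
proof -
  have "r * dB + s < (r + 1) * dB" using assms(2) by simp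
  also have "\<dots> \<le> dA * dB" using assms(1) by (intro mult_right_mono) auto
  finally show ?thesis .
qed

definition qform :: "nat \<Rightarrow> complex mat \<Rightarrow> complex vec \<Rightarrow> complex" where
  "qform n A v = (\<Sum>i<n. \<Sum>j<n. cnj (v $ i) * A $$ (i, j) * v $ j)"

lemma psd_iff_qform:
  "psd n A \<longleftrightarrow> A \<in> carrier_mat n n \<and>
     (\<forall>v\<in>carrier_vec n. Im (qform n A v) = 0 \<and> 0 \<le> Re (qform n A v))"
  unfolding psd_def qform_def Let_def by simp

lemma psd_carrier: "psd n A \<Longrightarrow> A \<in> carrier_mat n n"
  unfolding psd_def by simp

lemma psd_diag_nonneg:
  assumes "psd n A" "i < n"
  shows "Im (A $$ (i, i)) = 0 \<and> 0 \<le> Re (A $$ (i, i))"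
proof -
  have "qform n A (unit_vec n i) =
      (\<Sum>k<n. \<Sum>j<n. if k = i then (if j = i then A $$ (k, j) else 0) else 0)"
    unfolding qform_def using assms(2) by (intro sum.cong refl) auto
  also have "\<dots> = (\<Sum>k<n. if k = i then A $$ (k, i) else 0)"
    using assms(2) by (intro sum.cong refl) (simp add: sum.delta')
  also have "\<dots> = A $$ (i, i)" using assms(2) by (simp add: sum.delta')
  finally show ?thesis using assms unfolding psd_iff_qform by (metis unit_vec_carrier)
qed

lemma psd_1x1:
  assumes "Im c = 0" "0 \<le> Re c"
  shows "psd 1 (mat 1 1 (\<lambda>_. c))"
proof -
  have quadratic: "cnj z * c * z = c * of_real ((cmod z)\<^sup>2)" for z
  proof -
    have "cnj z * c * z = c * (z * cnj z)" by (simp add: ac_simps)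
    also have "\<dots> = c * of_real ((cmod z)\<^sup>2)" by (simp only: complex_norm_square)
    finally show ?thesis .
  qed
  show ?thesis unfolding psd_iff_qform qform_def using assms by (simp add: quadratic)
qed

lemma mat_1x1_one: "mat 1 1 (\<lambda>_. 1) = (1\<^sub>m 1 :: complex mat)"
  by (rule eq_matI) auto

lemma mat_1x1_zero: "mat 1 1 (\<lambda>_. 0) = (0\<^sub>m 1 1 :: complex mat)"
  by (rule eq_matI) auto

lemma density_one_1x1: "density 1 (1\<^sub>m 1)"
proof -
  have "psd 1 (1\<^sub>m 1)" using psd_1x1[of 1] unfolding mat_1x1_one by simp
  then show ?thesis unfolding density_def mtrace_def by simp
qed

lemma density_dim_pos: "density n \<rho> \<Longrightarrow> 0 < n"
  unfolding density_def mtrace_def psd_def by (cases n) auto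

lemma dsum_carrier:
  "A \<in> carrier_mat n n \<Longrightarrow> B \<in> carrier_mat m m \<Longrightarrow> dsum A B \<in> carrier_mat (n + m) (n + m)"
  unfolding dsum_def by auto

lemma dsum_index:
  assumes "A \<in> carrier_mat n n" "B \<in> carrier_mat m m" "i < n + m" "j < n + m"
  shows "dsum A B $$ (i, j) =
    (if i < n \<and> j < n then A $$ (i, j) else if n \<le> i \<and> n \<le> j then B $$ (i - n, j - n) else 0)"
  using assms unfolding dsum_def by (auto simp: index_mat_four_block)

lemma psd_dsum:
  assumes A: "psd n A" and B: "psd m B"
  shows "psd (n + m) (dsum A B)"
  unfolding psd_iff_qform
proof (intro conjI ballI)
  have Ac: "A \<in> carrier_mat n n" and Bc: "B \<in> carrier_mat m m"
    using A B by (simp_all add: psd_carrier)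
  show "dsum A B \<in> carrier_mat (n + m) (n + m)" by (rule dsum_carrier[OF Ac Bc])
  fix v :: "complex vec" assume "v \<in> carrier_vec (n + m)"
  let ?v1 = "vec n (\<lambda>i. v $ i)" and ?v2 = "vec m (\<lambda>i. v $ (n + i))"
  have q: "qform (n + m) (dsum A B) v = qform n A ?v1 + qform m B ?v2"
    unfolding qform_def sum_nat_add_split using Ac Bc by (simp add: dsum_index sum.distrib)
  have "Im (qform n A ?v1) = 0" "0 \<le> Re (qform n A ?v1)"
       "Im (qform m B ?v2) = 0" "0 \<le> Re (qform m B ?v2)"
    using A B unfolding psd_iff_qform by auto
  then show "Im (qform (n + m) (dsum A B) v) = 0" "0 \<le> Re (qform (n + m) (dsum A B) v)"
    using q by simp_all
qed

lemma psd_zero: "psd m (0\<^sub>m m m)"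
  unfolding psd_iff_qform qform_def by simp

lemma mat_2x2_eq_dsum:
  assumes "M \<in> carrier_mat 2 2" "M $$ (0, 1) = 0" "M $$ (1, 0) = 0"
  shows "M = dsum (mat 1 1 (\<lambda>_. M $$ (0, 0))) (mat 1 1 (\<lambda>_. M $$ (1, 1)))"
proof (rule eq_matI)
  fix i j assume "i < dim_row (dsum (mat 1 1 (\<lambda>_. M $$ (0, 0))) (mat 1 1 (\<lambda>_. M $$ (1, 1))))"
    "j < dim_col (dsum (mat 1 1 (\<lambda>_. M $$ (0, 0))) (mat 1 1 (\<lambda>_. M $$ (1, 1))))"
  then have ij: "i < 2" "j < 2" unfolding dsum_def by auto
  then show "M $$ (i, j) = dsum (mat 1 1 (\<lambda>_. M $$ (0, 0))) (mat 1 1 (\<lambda>_. M $$ (1, 1))) $$ (i, j)"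
    using assms by (subst dsum_index[where n = 1 and m = 1]) (auto simp: less_2_cases_iff)
qed (use assms in \<open>auto simp: dsum_def\<close>)

lemma mtrace_2x2: "M \<in> carrier_mat 2 2 \<Longrightarrow> mtrace M = M $$ (0, 0) + M $$ (1, 1)"
  unfolding mtrace_def by (simp add: numeral_2_eq_2)

subsection \<open>Kraus maps\<close>

definition kraus_map ::
    "nat \<Rightarrow> 'i set \<Rightarrow> ('i \<Rightarrow> nat \<Rightarrow> nat \<Rightarrow> complex) \<Rightarrow> nat \<Rightarrow> complex mat \<Rightarrow> complex mat" where
  "kraus_map n I K m X =
     mat m m (\<lambda>(s, t). \<Sum>r\<in>I. \<Sum>i<n. \<Sum>j<n. K r s i * X $$ (i, j) * cnj (K r t j))"

lemma kraus_map_carrier [simp]: "kraus_map n I K m X \<in> carrier_mat m m"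
  and kraus_map_dim [simp]: "dim_row (kraus_map n I K m X) = m" "dim_col (kraus_map n I K m X) = m"
  unfolding kraus_map_def by simp_all

lemma kraus_map_index [simp]:
  "s < m \<Longrightarrow> t < m \<Longrightarrow>
    kraus_map n I K m X $$ (s, t) = (\<Sum>r\<in>I. \<Sum>i<n. \<Sum>j<n. K r s i * X $$ (i, j) * cnj (K r t j))"
  unfolding kraus_map_def by simp

lemma qform_kraus_map:
  assumes "finite I"
  shows "qform m (kraus_map n I K m X) v =
    (\<Sum>r\<in>I. qform n X (vec n (\<lambda>j. \<Sum>t<m. cnj (K r t j) * v $ t)))"
proof -
  let ?F = "\<lambda>s t r i j. cnj (v $ s) * K r s i * X $$ (i, j) * cnj (K r t j) * v $ t"
  have "qform m (kraus_map n I K m X) v = (\<Sum>s<m. \<Sum>t<m. \<Sum>r\<in>I. \<Sum>i<n. \<Sum>j<n. ?F s t r i j)"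
    unfolding qform_def by (simp add: sum_distrib_left sum_distrib_right mult.assoc)
  also have "\<dots> = (\<Sum>r\<in>I. \<Sum>s<m. \<Sum>t<m. \<Sum>i<n. \<Sum>j<n. ?F s t r i j)"
    by (rule sum_rotate3)
  also have "\<dots> = (\<Sum>r\<in>I. \<Sum>i<n. \<Sum>s<m. \<Sum>t<m. \<Sum>j<n. ?F s t r i j)"
    by (rule sum.cong, rule refl, rule sum_rotate3)
  also have "\<dots> = (\<Sum>r\<in>I. \<Sum>i<n. \<Sum>j<n. \<Sum>s<m. \<Sum>t<m. ?F s t r i j)"
    by (rule sum.cong, rule refl, rule sum.cong, rule refl, rule sum_rotate3)
  also have "\<dots> = (\<Sum>r\<in>I. qform n X (vec n (\<lambda>j. \<Sum>t<m. cnj (K r t j) * v $ t)))"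
    unfolding qform_def
    by (simp add: sum_distrib_left sum_distrib_right mult.assoc mult.left_commute mult.commute)
  finally show ?thesis .
qed

lemma psd_kraus_map:
  assumes "finite I" "psd n X"
  shows "psd m (kraus_map n I K m X)"
  unfolding psd_iff_qform
proof (intro conjI ballI)
  fix v :: "complex vec"
  let ?x = "\<lambda>r. vec n (\<lambda>j. \<Sum>t<m. cnj (K r t j) * v $ t)"
  have "Im (qform n X (?x r)) = 0 \<and> 0 \<le> Re (qform n X (?x r))" for r
    using assms(2) unfolding psd_iff_qform by auto
  then show "Im (qform m (kraus_map n I K m X) v) = 0"
    and "0 \<le> Re (qform m (kraus_map n I K m X) v)"
    unfolding qform_kraus_map[OF assms(1)] Im_sum Re_sum by (simp_all add: sum_nonneg)
qed simp

lemma sum_block_restrict: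
  fixes g :: "nat \<Rightarrow> 'a::comm_ring_1"
  assumes "c < k"
  shows "(\<Sum>i<k * n. (if c = i div n then f (i mod n) else 0) * g i) = (\<Sum>y<n. f y * g (c * n + y))"
proof (cases "n = 0")
  case False
  have "(\<Sum>i<k * n. (if c = i div n then f (i mod n) else 0) * g i)
      = (\<Sum>x<k. \<Sum>y<n. (if c = x then f y else 0) * g (x * n + y))"
    unfolding sum_nat_mult_split using False by (intro sum.cong refl) simp
  also have "\<dots> = (\<Sum>x<k. if c = x then (\<Sum>y<n. f y * g (x * n + y)) else 0)"
    by (intro sum.cong refl) auto
  finally show ?thesis using assms by (simp add: sum.delta)
qed simp

text \<open>The amplification id \<otimes> E of a Kraus map is the Kraus map of the block-diagonal
  Kraus operators 1 \<otimes> K r.\<close>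

lemma ampl_kraus_map:
  fixes K :: "'i \<Rightarrow> nat \<Rightarrow> nat \<Rightarrow> complex" and n m k :: nat
  defines "K' \<equiv> \<lambda>r s i. if s div m = i div n then K r (s mod m) (i mod n) else 0"
  assumes Y: "Y \<in> carrier_mat (k * n) (k * n)"
  shows "ampl k n m (kraus_map n I K m) Y = kraus_map (k * n) I K' (k * m) Y"
proof (rule eq_matI)
  fix s t assume "s < dim_row (kraus_map (k * n) I K' (k * m) Y)"
    "t < dim_col (kraus_map (k * n) I K' (k * m) Y)"
  then have s: "s < k * m" and t: "t < k * m" by auto
  then have "0 < m" by (cases m) auto
  have sd: "s div m < k" "t div m < k" using s t by (simp_all add: less_mult_imp_div_less)
  have block: "(\<Sum>i<n. \<Sum>j<n. K r (s mod m) i * Y $$ (s div m * n + i, t div m * n + j) * cnj (K r (t mod m) j))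
      = (\<Sum>i<k * n. \<Sum>j<k * n. K' r s i * Y $$ (i, j) * cnj (K' r t j))" for r
  proof -
    have "(\<Sum>i<k * n. \<Sum>j<k * n. K' r s i * Y $$ (i, j) * cnj (K' r t j))
      = (\<Sum>i<k * n. K' r s i * (\<Sum>j<k * n.
           (if t div m = j div n then cnj (K r (t mod m) (j mod n)) else 0) * Y $$ (i, j)))"
      unfolding sum_distrib_left K'_def by (intro sum.cong refl) auto
    also have "\<dots> = (\<Sum>i<n. K r (s mod m) i * (\<Sum>j<k * n.
           (if t div m = j div n then cnj (K r (t mod m) (j mod n)) else 0) * Y $$ (s div m * n + i, j)))"
      unfolding K'_def by (rule sum_block_restrict[OF sd(1)])
    also have "\<dots> = (\<Sum>i<n. K r (s mod m) i *
           (\<Sum>j<n. cnj (K r (t mod m) j) * Y $$ (s div m * n + i, t div m * n + j)))"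
      by (intro sum.cong refl arg_cong2[where f = "(*)"] sum_block_restrict[OF sd(2)])
    finally show ?thesis by (simp add: sum_distrib_left mult.commute mult.left_commute)
  qed
  show "ampl k n m (kraus_map n I K m) Y $$ (s, t) = kraus_map (k * n) I K' (k * m) Y $$ (s, t)"
    using s t \<open>0 < m\<close> by (simp add: ampl_def blk_def block)
qed (auto simp: ampl_def)

lemma kraus_map_add:
  assumes "X \<in> carrier_mat n n" "Y \<in> carrier_mat n n"
  shows "kraus_map n I K m (X + Y) = kraus_map n I K m X + kraus_map n I K m Y"
proof (rule eq_matI)
  fix s t assume "s < dim_row (kraus_map n I K m X + kraus_map n I K m Y)"
    "t < dim_col (kraus_map n I K m X + kraus_map n I K m Y)"
  moreover have "(\<Sum>r\<in>I. \<Sum>i<n. \<Sum>j<n. K r s i * (X + Y) $$ (i, j) * cnj (K r t j)) =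
    (\<Sum>r\<in>I. \<Sum>i<n. \<Sum>j<n. K r s i * X $$ (i, j) * cnj (K r t j) + K r s i * Y $$ (i, j) * cnj (K r t j))"
    using assms by (intro sum.cong refl) (simp add: ring_distribs)
  ultimately show "kraus_map n I K m (X + Y) $$ (s, t) = (kraus_map n I K m X + kraus_map n I K m Y) $$ (s, t)"
    by (simp add: sum.distrib)
qed auto

lemma kraus_map_smult:
  assumes "X \<in> carrier_mat n n"
  shows "kraus_map n I K m (c \<cdot>\<^sub>m X) = c \<cdot>\<^sub>m kraus_map n I K m X"
proof (rule eq_matI)
  fix s t assume "s < dim_row (c \<cdot>\<^sub>m kraus_map n I K m X)" "t < dim_col (c \<cdot>\<^sub>m kraus_map n I K m X)"
  moreover have "(\<Sum>r\<in>I. \<Sum>i<n. \<Sum>j<n. K r s i * (c \<cdot>\<^sub>m X) $$ (i, j) * cnj (K r t j)) =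
    (\<Sum>r\<in>I. \<Sum>i<n. \<Sum>j<n. c * (K r s i * X $$ (i, j) * cnj (K r t j)))"
    using assms by (intro sum.cong refl) (simp add: mult.commute mult.left_commute)
  ultimately show "kraus_map n I K m (c \<cdot>\<^sub>m X) $$ (s, t) = (c \<cdot>\<^sub>m kraus_map n I K m X) $$ (s, t)"
    by (simp add: sum_distrib_left)
qed auto

lemma mtrace_kraus_map:
  assumes X: "X \<in> carrier_mat n n"
    and complete: "\<And>i j. i < n \<Longrightarrow> j < n \<Longrightarrow>
      (\<Sum>r\<in>I. \<Sum>s<m. K r s i * cnj (K r s j)) = (if i = j then 1 else 0)"
  shows "mtrace (kraus_map n I K m X) = mtrace X"
proof -
  let ?F = "\<lambda>s r i j. K r s i * X $$ (i, j) * cnj (K r s j)"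
  have "mtrace (kraus_map n I K m X) = (\<Sum>s<m. \<Sum>r\<in>I. \<Sum>i<n. \<Sum>j<n. ?F s r i j)"
    unfolding mtrace_def by simp
  also have "\<dots> = (\<Sum>i<n. \<Sum>s<m. \<Sum>r\<in>I. \<Sum>j<n. ?F s r i j)"
    by (rule sum_rotate3)
  also have "\<dots> = (\<Sum>i<n. \<Sum>j<n. \<Sum>s<m. \<Sum>r\<in>I. ?F s r i j)"
    by (rule sum.cong, rule refl, rule sum_rotate3)
  also have "\<dots> = (\<Sum>i<n. \<Sum>j<n. \<Sum>r\<in>I. \<Sum>s<m. ?F s r i j)"
    by (rule sum.cong, rule refl, rule sum.cong, rule refl, rule sum.swap)
  also have "\<dots> = (\<Sum>i<n. \<Sum>j<n. X $$ (i, j) * (\<Sum>r\<in>I. \<Sum>s<m. K r s i * cnj (K r s j)))"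
    by (simp add: sum_distrib_left mult.commute mult.left_commute)
  also have "\<dots> = (\<Sum>i<n. \<Sum>j<n. if i = j then X $$ (i, j) else 0)"
    by (intro sum.cong refl) (simp add: complete)
  also have "\<dots> = (\<Sum>i<n. X $$ (i, i))" by simp
  finally show ?thesis unfolding mtrace_def using X by simp
qed

lemma kraus_map_cptp:
  assumes I: "finite I"
    and complete: "\<And>i j. i < n \<Longrightarrow> j < n \<Longrightarrow>
      (\<Sum>r\<in>I. \<Sum>s<m. K r s i * cnj (K r s j)) = (if i = j then 1 else 0)"
  shows "cptp n m (kraus_map n I K m)"
  unfolding cptp_def
proof (intro conjI ballI allI impI)
  fix k and Y :: "complex mat" assume Y: "psd (k * n) Y"
  show "psd (k * m) (ampl k n m (kraus_map n I K m) Y)"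
    unfolding ampl_kraus_map[OF psd_carrier[OF Y]] by (rule psd_kraus_map[OF I Y])
qed (simp_all add: kraus_map_add kraus_map_smult mtrace_kraus_map complete)

lemma cptp_carrier: "cptp n m E \<Longrightarrow> X \<in> carrier_mat n n \<Longrightarrow> E X \<in> carrier_mat m m"
  and cptp_mtrace: "cptp n m E \<Longrightarrow> X \<in> carrier_mat n n \<Longrightarrow> mtrace (E X) = mtrace X"
  unfolding cptp_def by blast+

lemma psd_cptp:
  assumes E: "cptp n m E" and X: "psd n X"
  shows "psd m (E X)"
proof -
  have Xc: "X \<in> carrier_mat n n" using X by (rule psd_carrier)
  have "blk n X 0 0 = X" using Xc by (intro eq_matI) (auto simp: blk_def)
  then have "ampl 1 n m E X = E X"
    using cptp_carrier[OF E Xc] by (intro eq_matI) (auto simp: ampl_def)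
  moreover have "\<forall>k Y. psd (k * n) Y \<longrightarrow> psd (k * m) (ampl k n m E Y)"
    using E unfolding cptp_def by blast
  then have "psd (1 * m) (ampl 1 n m E X)" using X by (metis mult_1)
  ultimately show ?thesis by simp
qed

lemma density_cptp: "cptp n m E \<Longrightarrow> density n \<rho> \<Longrightarrow> density m (E \<rho>)"
  unfolding density_def by (simp add: psd_cptp cptp_mtrace psd_carrier)

subsection \<open>Tensor products and the partial trace\<close>

lemma kron_carrier:
  "A \<in> carrier_mat dA dA \<Longrightarrow> B \<in> carrier_mat dB dB \<Longrightarrow> kron A B \<in> carrier_mat (dA * dB) (dA * dB)"
  unfolding kron_def by simp

lemma kron_index:
  assumes "A \<in> carrier_mat dA dA" "B \<in> carrier_mat dB dB" "i < dA * dB" "j < dA * dB"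
  shows "kron A B $$ (i, j) = A $$ (i div dB, j div dB) * B $$ (i mod dB, j mod dB)"
  using assms unfolding kron_def by simp

lemma kron_index_blocks:
  assumes "A \<in> carrier_mat dA dA" "B \<in> carrier_mat dB dB" "a < dA" "p < dB" "a' < dA" "p' < dB"
  shows "kron A B $$ (a * dB + p, a' * dB + p') = A $$ (a, a') * B $$ (p, p')"
  using kron_index[OF assms(1,2) mult_add_less_mult[OF assms(3,4)] mult_add_less_mult[OF assms(5,6)]] assms
  by simp

lemma kron_add_left:
  assumes "A \<in> carrier_mat dA dA" "A' \<in> carrier_mat dA dA" "B \<in> carrier_mat dB dB"
  shows "kron (A + A') B = kron A B + kron A' B"
proof (rule eq_matI)
  fix i j assume "i < dim_row (kron A B + kron A' B)" "j < dim_col (kron A B + kron A' B)"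
  then have ij: "i < dA * dB" "j < dA * dB" using kron_carrier[OF assms(2,3)] by auto
  then have "i div dB < dA" "j div dB < dA" by (simp_all add: less_mult_imp_div_less mult.commute)
  then show "kron (A + A') B $$ (i, j) = (kron A B + kron A' B) $$ (i, j)"
    using ij assms kron_carrier[OF assms(1,3)] kron_carrier[OF assms(2,3)]
    by (simp add: kron_index[OF _ assms(3) ij] algebra_simps)
qed (use assms in \<open>auto simp: kron_def\<close>)

lemma mtrace_kron:
  assumes "A \<in> carrier_mat dA dA" "B \<in> carrier_mat dB dB"
  shows "mtrace (kron A B) = mtrace A * mtrace B"
proof -
  have "mtrace (kron A B) = (\<Sum>a<dA. \<Sum>p<dB. kron A B $$ (a * dB + p, a * dB + p))"
    using kron_carrier[OF assms] unfolding mtrace_def by (simp add: sum_nat_mult_split)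
  also have "\<dots> = (\<Sum>a<dA. \<Sum>p<dB. A $$ (a, a) * B $$ (p, p))"
    using assms by (intro sum.cong refl) (simp add: kron_index_blocks)
  finally show ?thesis using assms by (simp add: mtrace_def sum_product)
qed

text \<open>Writing Z as a sum of rank-one operators f_r f_r^*, the map X \<mapsto> Z \<otimes> X has the Kraus
  operators f_r \<otimes> 1.\<close>

lemma kron_eq_kraus_map:
  assumes Z: "Z \<in> carrier_mat dA dA" and X: "X \<in> carrier_mat dB dB"
    and f: "\<And>a b. a < dA \<Longrightarrow> b < dA \<Longrightarrow> (\<Sum>r\<in>I. f r a * cnj (f r b)) = Z $$ (a, b)"
  shows "kron Z X = kraus_map dB I (\<lambda>r s i. f r (s div dB) * (if s mod dB = i then 1 else 0)) (dA * dB) X"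
    (is "_ = kraus_map _ _ ?K _ _")
proof (rule eq_matI)
  fix s t assume "s < dim_row (kraus_map dB I ?K (dA * dB) X)" "t < dim_col (kraus_map dB I ?K (dA * dB) X)"
  then have st: "s < dA * dB" "t < dA * dB" by auto
  then have "0 < dB" by (cases dB) auto
  have d: "s div dB < dA" "t div dB < dA" using st by (simp_all add: less_mult_imp_div_less mult.commute)
  have "kraus_map dB I ?K (dA * dB) X $$ (s, t) = (\<Sum>r\<in>I. \<Sum>i<dB. \<Sum>j<dB.
      if i = s mod dB then (if j = t mod dB then f r (s div dB) * X $$ (i, j) * cnj (f r (t div dB)) else 0) else 0)"
    using st by (intro trans[OF kraus_map_index] sum.cong refl) auto
  also have "\<dots> = (\<Sum>r\<in>I. f r (s div dB) * X $$ (s mod dB, t mod dB) * cnj (f r (t div dB)))"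
    using \<open>0 < dB\<close> by (intro sum.cong refl sum_delta2) auto
  also have "\<dots> = (\<Sum>r\<in>I. f r (s div dB) * cnj (f r (t div dB))) * X $$ (s mod dB, t mod dB)"
    by (simp add: sum_distrib_left sum_distrib_right ac_simps)
  also have "\<dots> = kron Z X $$ (s, t)" using kron_index[OF Z X st] f[OF d] by simp
  finally show "kron Z X $$ (s, t) = kraus_map dB I ?K (dA * dB) X $$ (s, t)" ..
qed (use Z X in \<open>auto simp: kron_def\<close>)

lemma psd_kron:
  assumes "finite I" and Z: "Z \<in> carrier_mat dA dA" and X: "psd dB X"
    and f: "\<And>a b. a < dA \<Longrightarrow> b < dA \<Longrightarrow> (\<Sum>r\<in>I. f r a * cnj (f r b)) = Z $$ (a, b)"
  shows "psd (dA * dB) (kron Z X)"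
  using kron_eq_kraus_map[OF Z psd_carrier[OF X] f] psd_kraus_map[OF assms(1) X] by simp

lemma psd_kron_one:
  assumes "psd dB \<sigma>"
  shows "psd (dA * dB) (kron (1\<^sub>m dA) \<sigma>)"
proof (rule psd_kron[where I = "{..<dA}" and f = "\<lambda>r a. if a = r then 1 else 0"])
  fix a b assume "a < dA" "b < dA"
  moreover have "(if a = r then 1 else 0) * cnj (if b = r then 1 else 0) =
      (if r = a then (if a = b then 1 else 0) else (0 :: complex))" for r
    by auto
  ultimately show "(\<Sum>r\<in>{..<dA}. (if a = r then 1 else 0) * cnj (if b = r then 1 else 0)) = 1\<^sub>m dA $$ (a, b)"
    by (simp add: sum.delta)
qed (use assms in auto)

lemma sum_block_delta:
  fixes a b i j :: nat
  assumes "i < a * b" "j < a * b"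
  shows "(\<Sum>r<a. \<Sum>s<b. (if i = r * b + s then 1 else 0) * cnj (if j = r * b + s then 1 else 0)) =
    (if i = j then 1 else (0 :: complex))"
proof -
  have "(\<Sum>r<a. \<Sum>s<b. (if i = r * b + s then 1 else 0) * cnj (if j = r * b + s then 1 else 0)) =
      (\<Sum>r<a. \<Sum>s<b. if r * b + s = i then (if i = j then 1 else 0) else (0 :: complex))"
    by (intro sum.cong refl) auto
  also have "\<dots> = (\<Sum>k<a * b. if k = i then (if i = j then 1 else 0) else 0)"
    by (rule sum_nat_mult_split[symmetric])
  also have "\<dots> = (if i = j then 1 else 0)" using assms by (cases "i = j") simp_all
  finally show ?thesis .
qed

lemma ptrace_A_eq_kraus_map:
  "ptrace_A dA dB = kraus_map (dA * dB) {..<dA} (\<lambda>r s i. if i = r * dB + s then 1 else 0) dB"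
    (is "_ = kraus_map _ _ ?K _")
proof (rule ext, rule eq_matI)
  fix X :: "complex mat" and s t
  assume "s < dim_row (kraus_map (dA * dB) {..<dA} ?K dB X)" "t < dim_col (kraus_map (dA * dB) {..<dA} ?K dB X)"
  then have st: "s < dB" "t < dB" by auto
  have "kraus_map (dA * dB) {..<dA} ?K dB X $$ (s, t) = (\<Sum>r<dA. \<Sum>i<dA * dB. \<Sum>j<dA * dB.
      if i = r * dB + s then (if j = r * dB + t then X $$ (i, j) else 0) else 0)"
    using st by (intro trans[OF kraus_map_index] sum.cong refl) auto
  also have "\<dots> = (\<Sum>r<dA. X $$ (r * dB + s, r * dB + t))"
    using st mult_add_less_mult by (intro sum.cong refl sum_delta2) auto
  finally show "ptrace_A dA dB X $$ (s, t) = kraus_map (dA * dB) {..<dA} ?K dB X $$ (s, t)"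
    unfolding ptrace_A_def using st by (simp add: add.commute mult.commute)
qed (auto simp: ptrace_A_def)

lemma cptp_ptrace_A: "cptp (dA * dB) dB (ptrace_A dA dB)"
  unfolding ptrace_A_eq_kraus_map by (rule kraus_map_cptp) (simp_all add: sum_block_delta)

lemma ptrace_A_kron:
  assumes "A \<in> carrier_mat dA dA" "B \<in> carrier_mat dB dB"
  shows "ptrace_A dA dB (kron A B) = mtrace A \<cdot>\<^sub>m B"
proof (rule eq_matI)
  fix s t assume "s < dim_row (mtrace A \<cdot>\<^sub>m B)" "t < dim_col (mtrace A \<cdot>\<^sub>m B)"
  then have st: "s < dB" "t < dB" using assms by auto
  then have "ptrace_A dA dB (kron A B) $$ (s, t) = (\<Sum>a<dA. A $$ (a, a) * B $$ (s, t))"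
    unfolding ptrace_A_def using assms by (simp add: kron_index_blocks)
  then show "ptrace_A dA dB (kron A B) $$ (s, t) = (mtrace A \<cdot>\<^sub>m B) $$ (s, t)"
    using st assms by (simp add: mtrace_def sum_distrib_right)
qed (use assms in \<open>auto simp: ptrace_A_def\<close>)

lemma ptrace_A_dsum:
  assumes "A \<in> carrier_mat n n" "B \<in> carrier_mat n n"
  shows "ptrace_A 2 n (dsum A B) = A + B"
  using assms by (intro eq_matI) (auto simp: ptrace_A_def numeral_2_eq_2 dsum_index)

lemma ptrace_A_trace:
  assumes "X \<in> carrier_mat n n"
  shows "ptrace_A n 1 X = mat 1 1 (\<lambda>_. mtrace X)"
  using assms by (intro eq_matI) (auto simp: ptrace_A_def mtrace_def)

subsection \<open>Consequences of the axioms\<close>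

lemma rel_K_entropy_monotone:
  assumes "rel_K_entropy b D" "0 < n" "cptp n m E" "psd n S" "psd n T"
  shows "D (E S) (E T) \<le> D S T"
  using assms(1)[unfolded rel_K_entropy_def, THEN conjunct1] assms(2-) by blast

lemma rel_K_entropy_dsum_zero:
  assumes "rel_K_entropy b D" "0 < n" "psd n S" "psd n T" "psd m T'"
  shows "D (dsum S (0\<^sub>m m m)) (dsum T T') = D S T"
  using assms(1)[unfolded rel_K_entropy_def, THEN conjunct2, THEN conjunct1] assms(2-) by blast

lemma rel_K_entropy_scale:
  assumes "rel_K_entropy b D" "0 < n" "psd n S" "psd n T" "0 < c"
  shows "D S (complex_of_real c \<cdot>\<^sub>m T) = D S T + ereal (log b (1 / c))"
  using assms(1)[unfolded rel_K_entropy_def, THEN conjunct2, THEN conjunct2, THEN conjunct1] assms(2-) by blast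

lemma rel_K_entropy_self:
  assumes "rel_K_entropy b D" "density n \<rho>"
  shows "D \<rho> \<rho> = 0"
  using assms(1)[unfolded rel_K_entropy_def, THEN conjunct2, THEN conjunct2, THEN conjunct2] assms(2-) by blast

lemma rel_K_entropy_antimono_right:
  assumes DK: "rel_K_entropy b D" and n: "0 < n"
    and S: "psd n S" and T: "psd n T" and T': "psd n T'"
  shows "D S (T + T') \<le> D S T"
proof -
  have Sc: "S \<in> carrier_mat n n" and Tc: "T \<in> carrier_mat n n" and T'c: "T' \<in> carrier_mat n n"
    using S T T' by (simp_all add: psd_carrier)
  have E: "cptp (n + n) n (ptrace_A 2 n)" using cptp_ptrace_A[of 2 n] by (simp add: mult_2)
  have "D (ptrace_A 2 n (dsum S (0\<^sub>m n n))) (ptrace_A 2 n (dsum T T')) \<le> D (dsum S (0\<^sub>m n n)) (dsum T T')"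
    using n by (intro rel_K_entropy_monotone[OF DK _ E psd_dsum[OF S psd_zero] psd_dsum[OF T T']]) simp
  also have "\<dots> = D S T" by (rule rel_K_entropy_dsum_zero[OF DK n S T T'])
  finally show ?thesis using ptrace_A_dsum[OF Sc zero_carrier_mat] ptrace_A_dsum[OF Tc T'c] Sc by simp
qed

lemma rel_K_entropy_ge_log_trace:
  assumes DK: "rel_K_entropy b D" and \<rho>: "density n \<rho>" and T: "psd n T"
    and trace: "mtrace T = complex_of_real t" and "0 < t"
  shows "ereal (log b (1 / t)) \<le> D \<rho> T"
proof -
  have \<rho>p: "psd n \<rho>" and "mtrace \<rho> = 1" using \<rho> unfolding density_def by auto
  have E: "cptp n 1 (ptrace_A n 1)" using cptp_ptrace_A[of n 1] by simp
  have one: "psd 1 (1\<^sub>m 1)" using density_one_1x1 unfolding density_def by simp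
  have "ptrace_A n 1 \<rho> = 1\<^sub>m 1"
    using ptrace_A_trace[OF psd_carrier[OF \<rho>p]] \<open>mtrace \<rho> = 1\<close> mat_1x1_one by simp
  moreover have "ptrace_A n 1 T = complex_of_real t \<cdot>\<^sub>m 1\<^sub>m 1"
    unfolding ptrace_A_trace[OF psd_carrier[OF T]] trace by (rule eq_matI) auto
  ultimately have "D (ptrace_A n 1 \<rho>) (ptrace_A n 1 T) = ereal (log b (1 / t))"
    using rel_K_entropy_scale[OF DK _ one one \<open>0 < t\<close>] rel_K_entropy_self[OF DK density_one_1x1] by simp
  then show ?thesis
    using rel_K_entropy_monotone[OF DK density_dim_pos[OF \<rho>] E \<rho>p T] by simp
qed

text \<open>Entries of the projection onto w (for x = 0) and onto its orthogonal complement (for x \<noteq> 0).\<close>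

definition ket_proj :: "(nat \<Rightarrow> complex) \<Rightarrow> nat \<Rightarrow> nat \<Rightarrow> nat \<Rightarrow> complex" where
  "ket_proj w x a b = (if x = 0 then w a * cnj (w b) else (if a = b then 1 else 0) - w a * cnj (w b))"

definition proj_mat :: "nat \<Rightarrow> (nat \<Rightarrow> complex) \<Rightarrow> nat \<Rightarrow> complex mat" where
  "proj_mat d w x = mat d d (\<lambda>(a, b). ket_proj w x a b)"

lemma sum_mult_cnj_eq: "(\<Sum>i<d. w i * cnj (w i)) = complex_of_real (\<Sum>i<d. (cmod (w i))\<^sup>2)"
  unfolding of_real_sum by (intro sum.cong refl) (simp only: complex_norm_square)

lemma cnj_ket_proj: "cnj (ket_proj w x a b) = ket_proj w x b a"
  unfolding ket_proj_def by simp

lemma ket_proj_idem: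
  assumes norm: "(\<Sum>i<d. w i * cnj (w i)) = 1" and "a < d" "b < d"
  shows "(\<Sum>r<d. ket_proj w x a r * ket_proj w x r b) = ket_proj w x a b"
proof (cases "x = 0")
  case True
  have "(\<Sum>r<d. ket_proj w x a r * ket_proj w x r b) = w a * cnj (w b) * (\<Sum>r<d. w r * cnj (w r))"
    unfolding ket_proj_def using True by (simp add: sum_distrib_left ac_simps)
  then show ?thesis using True norm by (simp add: ket_proj_def)
next
  case False
  have "ket_proj w x a r * ket_proj w x r b =
      (if r = a then (if a = b then 1 else 0) else 0) - (if r = a then w r * cnj (w b) else 0)
      - (if r = b then w a * cnj (w r) else 0) + w a * cnj (w b) * (w r * cnj (w r))" for r
    unfolding ket_proj_def using False by (cases "r = a"; cases "r = b") (simp_all add: algebra_simps)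
  then have "(\<Sum>r<d. ket_proj w x a r * ket_proj w x r b) =
      (if a = b then 1 else 0) - w a * cnj (w b) - w a * cnj (w b) + w a * cnj (w b) * (\<Sum>r<d. w r * cnj (w r))"
    using assms(2,3) by (simp add: sum_subtractf sum.distrib sum_distrib_left)
  then show ?thesis using False norm by (simp add: ket_proj_def)
qed

lemma proj_mat_carrier: "proj_mat d w x \<in> carrier_mat d d"
  unfolding proj_mat_def by simp

lemma ketbra_eq_proj_mat: "\<psi> \<in> carrier_vec d \<Longrightarrow> ketbra \<psi> = proj_mat d (($) \<psi>) 0"
  by (intro eq_matI) (auto simp: ketbra_def proj_mat_def ket_proj_def)

lemma one_mat_eq_proj_mat_add: "1\<^sub>m d = proj_mat d w 0 + proj_mat d w 1"
  by (intro eq_matI) (auto simp: proj_mat_def ket_proj_def)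

lemma psd_kron_proj_mat:
  assumes norm: "(\<Sum>i<d. w i * cnj (w i)) = 1" and "psd dB \<rho>"
  shows "psd (d * dB) (kron (proj_mat d w x) \<rho>)"
proof (rule psd_kron[where I = "{..<d}" and f = "\<lambda>r a. ket_proj w x a r"])
  fix a b assume "a < d" "b < d"
  then show "(\<Sum>r\<in>{..<d}. ket_proj w x a r * cnj (ket_proj w x b r)) = proj_mat d w x $$ (a, b)"
    using ket_proj_idem[OF norm] by (simp add: cnj_ket_proj proj_mat_def)
qed (use assms(2) in \<open>simp_all add: proj_mat_carrier\<close>)

lemma mtrace_ketbra: "\<psi> \<in> carrier_vec d \<Longrightarrow> mtrace (ketbra \<psi>) = (\<Sum>i<d. \<psi> $ i * cnj (\<psi> $ i))"
  unfolding ketbra_def mtrace_def by simp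

lemma ketbra_carrier: "\<psi> \<in> carrier_vec d \<Longrightarrow> ketbra \<psi> \<in> carrier_mat d d"
  unfolding ketbra_def by simp

lemma density_kron_ketbra:
  assumes \<psi>: "\<psi> \<in> carrier_vec dA" and norm: "(\<Sum>i<dA. \<psi> $ i * cnj (\<psi> $ i)) = 1"
    and \<rho>: "density dB \<rho>"
  shows "density (dA * dB) (kron (ketbra \<psi>) \<rho>)"
proof -
  have \<rho>p: "psd dB \<rho>" and "mtrace \<rho> = 1" using \<rho> unfolding density_def by auto
  then show ?thesis
    unfolding density_def ketbra_eq_proj_mat[OF \<psi>]
    using psd_kron_proj_mat[OF norm \<rho>p] mtrace_kron[OF proj_mat_carrier psd_carrier[OF \<rho>p]]
      mtrace_ketbra[OF \<psi>] ketbra_eq_proj_mat[OF \<psi>] norm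
    by simp
qed

subsection \<open>Measuring a pure state\<close>

text \<open>Measure {|w\<rangle>\<langle>w|, 1 - |w\<rangle>\<langle>w|} on the first factor and discard the second; outcome x is
  recorded in the diagonal entry x of a 2 x 2 matrix. The Kraus operators are |x\<rangle>\<langle>r| P_x \<otimes> \<langle>p|.\<close>

definition meas_kraus :: "nat \<Rightarrow> (nat \<Rightarrow> complex) \<Rightarrow> nat \<times> nat \<times> nat \<Rightarrow> nat \<Rightarrow> nat \<Rightarrow> complex" where
  "meas_kraus dB w y s i = (case y of (x, r, p) \<Rightarrow>
     if s = x then ket_proj w x r (i div dB) * (if p = i mod dB then 1 else 0) else 0)"

definition meas_channel :: "nat \<Rightarrow> nat \<Rightarrow> (nat \<Rightarrow> complex) \<Rightarrow> complex mat \<Rightarrow> complex mat" where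
  "meas_channel dA dB w = kraus_map (dA * dB) ({..<2} \<times> {..<dA} \<times> {..<dB}) (meas_kraus dB w) 2"

lemma meas_kraus_blocks:
  "q < dB \<Longrightarrow> meas_kraus dB w (x, r, p) s (a * dB + q) =
    (if s = x then ket_proj w x r a * (if p = q then 1 else 0) else 0)"
  unfolding meas_kraus_def by simp

lemma sum_ket_proj_outcomes:
  assumes norm: "(\<Sum>i<d. w i * cnj (w i)) = 1" and "a < d" "b < d"
  shows "(\<Sum>x<2. \<Sum>r<d. ket_proj w x r a * cnj (ket_proj w x r b)) = (if a = b then 1 else 0)"
proof -
  have "(\<Sum>r<d. ket_proj w x r a * cnj (ket_proj w x r b)) = ket_proj w x b a" for x
    using ket_proj_idem[OF norm assms(3,2), of x] by (simp add: cnj_ket_proj mult.commute)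
  then show ?thesis by (auto simp: numeral_2_eq_2 ket_proj_def)
qed

lemma cptp_meas_channel:
  assumes norm: "(\<Sum>i<dA. w i * cnj (w i)) = 1"
  shows "cptp (dA * dB) 2 (meas_channel dA dB w)"
  unfolding meas_channel_def
proof (rule kraus_map_cptp)
  fix i j assume ij: "i < dA * dB" "j < dA * dB"
  then have "0 < dB" by (cases dB) auto
  have d: "i div dB < dA" "j div dB < dA" using ij by (simp_all add: less_mult_imp_div_less mult.commute)
  have m: "i mod dB < dB" "j mod dB < dB" using \<open>0 < dB\<close> by auto
  let ?P = "\<lambda>x r. ket_proj w x r (i div dB) * cnj (ket_proj w x r (j div dB))"
  have outcome: "(\<Sum>s<2. meas_kraus dB w (x, r, p) s i * cnj (meas_kraus dB w (x, r, p) s j)) =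
      (if p = i mod dB then (if p = j mod dB then ?P x r else 0) else 0)" if "x < 2" for x r p
  proof -
    have "(\<Sum>s<2. meas_kraus dB w (x, r, p) s i * cnj (meas_kraus dB w (x, r, p) s j)) =
        (\<Sum>s<2. if s = x then (if p = i mod dB then (if p = j mod dB then ?P x r else 0) else 0) else 0)"
      unfolding meas_kraus_def by (intro sum.cong refl) auto
    then show ?thesis using that by (simp add: sum.delta)
  qed
  have "(\<Sum>y\<in>{..<2} \<times> {..<dA} \<times> {..<dB}. \<Sum>s<2. meas_kraus dB w y s i * cnj (meas_kraus dB w y s j))
      = (\<Sum>x<2. \<Sum>r<dA. \<Sum>p<dB. if p = i mod dB then (if p = j mod dB then ?P x r else 0) else 0)"
    unfolding sum_cartesian3 by (intro sum.cong refl) (simp add: outcome)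
  also have "\<dots> = (\<Sum>x<2. \<Sum>r<dA. if i mod dB = j mod dB then ?P x r else 0)"
    using m by (intro sum.cong refl) (simp add: sum.delta')
  also have "\<dots> = (if i mod dB = j mod dB then (\<Sum>x<2. \<Sum>r<dA. ?P x r) else 0)"
    by (simp add: sum_if_const)
  also have "\<dots> = (if i mod dB = j mod dB then (if i div dB = j div dB then 1 else 0) else 0)"
    using sum_ket_proj_outcomes[OF norm d] by simp
  also have "\<dots> = (if i = j then 1 else 0)"
    by (metis div_mult_mod_eq)
  finally show "(\<Sum>y\<in>{..<2} \<times> {..<dA} \<times> {..<dB}. \<Sum>s<2. meas_kraus dB w y s i * cnj (meas_kraus dB w y s j)) =
      (if i = j then 1 else 0)" .
qed simp

lemma meas_channel_kron:
  assumes Z: "Z \<in> carrier_mat dA dA" and R: "\<rho> \<in> carrier_mat dB dB" and st: "s < 2" "t < 2"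
  shows "meas_channel dA dB w (kron Z \<rho>) $$ (s, t) =
    (if s = t then (\<Sum>r<dA. \<Sum>a<dA. \<Sum>b<dA. ket_proj w s r a * Z $$ (a, b) * cnj (ket_proj w s r b)) * mtrace \<rho>
     else 0)"
proof -
  let ?C = "\<lambda>x r. \<Sum>a<dA. \<Sum>b<dA. ket_proj w x r a * Z $$ (a, b) * cnj (ket_proj w x r b)"
  have block: "(\<Sum>i<dA * dB. \<Sum>j<dA * dB.
        meas_kraus dB w (x, r, p) s i * kron Z \<rho> $$ (i, j) * cnj (meas_kraus dB w (x, r, p) t j))
      = (if x = s \<and> x = t then ?C x r * \<rho> $$ (p, p) else 0)" if p: "p < dB" for x r p
  proof -
    have "(\<Sum>i<dA * dB. \<Sum>j<dA * dB.
          meas_kraus dB w (x, r, p) s i * kron Z \<rho> $$ (i, j) * cnj (meas_kraus dB w (x, r, p) t j))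
        = (\<Sum>a<dA. \<Sum>q<dB. \<Sum>b<dA. \<Sum>q'<dB. if q' = p then (if q = p then (if x = s \<and> x = t then
            ket_proj w x r a * Z $$ (a, b) * cnj (ket_proj w x r b) * \<rho> $$ (p, p) else 0) else 0) else 0)"
      unfolding sum_nat_mult_split
      using Z R by (intro sum.cong refl) (auto simp: meas_kraus_blocks kron_index_blocks)
    also have "\<dots> = (\<Sum>a<dA. \<Sum>b<dA. if x = s \<and> x = t then
            ket_proj w x r a * Z $$ (a, b) * cnj (ket_proj w x r b) * \<rho> $$ (p, p) else 0)"
      using p by (simp add: sum_if_const sum.delta')
    also have "\<dots> = (if x = s \<and> x = t then ?C x r * \<rho> $$ (p, p) else 0)"
      by (simp add: sum_if_const sum_distrib_right)
    finally show ?thesis .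
  qed
  have "meas_channel dA dB w (kron Z \<rho>) $$ (s, t) = (\<Sum>x<2. \<Sum>r<dA. \<Sum>p<dB. \<Sum>i<dA * dB. \<Sum>j<dA * dB.
      meas_kraus dB w (x, r, p) s i * kron Z \<rho> $$ (i, j) * cnj (meas_kraus dB w (x, r, p) t j))"
    unfolding meas_channel_def using st by (simp add: sum_cartesian3)
  also have "\<dots> = (\<Sum>x<2. \<Sum>r<dA. \<Sum>p<dB. if x = s \<and> x = t then ?C x r * \<rho> $$ (p, p) else 0)"
    by (intro sum.cong refl) (simp add: block)
  also have "\<dots> = (\<Sum>x<2. if x = s then (if s = t then (\<Sum>r<dA. \<Sum>p<dB. ?C s r * \<rho> $$ (p, p)) else 0) else 0)"
    by (intro sum.cong refl) (auto simp: sum_if_const)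
  also have "\<dots> = (if s = t then (\<Sum>r<dA. ?C s r) * (\<Sum>p<dB. \<rho> $$ (p, p)) else 0)"
    using st by (simp add: sum_product)
  finally show ?thesis using R by (simp add: mtrace_def)
qed

lemma meas_channel_kron_ketbra:
  assumes \<psi>: "\<psi> \<in> carrier_vec dA" and norm: "(\<Sum>i<dA. \<psi> $ i * cnj (\<psi> $ i)) = 1"
    and \<rho>: "density dB \<rho>"
  shows "meas_channel dA dB (($) \<psi>) (kron (ketbra \<psi>) \<rho>) = dsum (1\<^sub>m 1) (0\<^sub>m 1 1)"
proof -
  let ?w = "($) \<psi>" and ?S = "kron (ketbra \<psi>) \<rho>"
  let ?E = "meas_channel dA dB ?w"
  have \<rho>c: "\<rho> \<in> carrier_mat dB dB" and "mtrace \<rho> = 1"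
    using \<rho> unfolding density_def by (auto simp: psd_carrier)
  have Kc: "ketbra \<psi> \<in> carrier_mat dA dA" by (rule ketbra_carrier[OF \<psi>])
  have ESc: "?E ?S \<in> carrier_mat 2 2" unfolding meas_channel_def by simp
  have entry: "?E ?S $$ (s, t) = (if s = t then
      (\<Sum>r<dA. \<Sum>a<dA. \<Sum>b<dA. ket_proj ?w s r a * ketbra \<psi> $$ (a, b) * cnj (ket_proj ?w s r b)) else 0)"
    if "s < 2" "t < 2" for s t
    using meas_channel_kron[OF Kc \<rho>c that] \<open>mtrace \<rho> = 1\<close> by simp
  have "(\<Sum>r<dA. \<Sum>a<dA. \<Sum>b<dA. ket_proj ?w 0 r a * ketbra \<psi> $$ (a, b) * cnj (ket_proj ?w 0 r b)) =
      (\<Sum>r<dA. \<Sum>a<dA. \<Sum>b<dA. (\<psi> $ r * cnj (\<psi> $ r)) * ((\<psi> $ a * cnj (\<psi> $ a)) * (\<psi> $ b * cnj (\<psi> $ b))))"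
    using \<psi> by (intro sum.cong refl) (simp add: ket_proj_def ketbra_def ac_simps)
  also have "\<dots> = 1" using norm by (simp flip: sum_distrib_left)
  finally have E00: "?E ?S $$ (0, 0) = 1" using entry[of 0 0] by simp
  have "mtrace (?E ?S) = 1"
    using cptp_mtrace[OF cptp_meas_channel[OF norm] kron_carrier[OF Kc \<rho>c]]
      density_kron_ketbra[OF \<psi> norm \<rho>] unfolding density_def by simp
  then have E11: "?E ?S $$ (1, 1) = 0" using mtrace_2x2[OF ESc] E00 by simp
  show ?thesis
    using mat_2x2_eq_dsum[OF ESc] entry[of 0 1] entry[of 1 0] E00 E11 mat_1x1_one mat_1x1_zero by simp
qed

lemma meas_channel_kron_one:
  assumes norm: "(\<Sum>i<dA. w i * cnj (w i)) = 1" and \<sigma>: "density dB \<sigma>"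
  obtains c where "psd 1 c" "meas_channel dA dB w (kron (1\<^sub>m dA) \<sigma>) = dsum (1\<^sub>m 1) c"
proof -
  let ?T = "kron (1\<^sub>m dA) \<sigma>"
  let ?E = "meas_channel dA dB w"
  have \<sigma>p: "psd dB \<sigma>" and "mtrace \<sigma> = 1" using \<sigma> unfolding density_def by auto
  have ETc: "?E ?T \<in> carrier_mat 2 2" unfolding meas_channel_def by simp
  have entry: "?E ?T $$ (s, t) = (if s = t then
      (\<Sum>r<dA. \<Sum>a<dA. \<Sum>b<dA. ket_proj w s r a * 1\<^sub>m dA $$ (a, b) * cnj (ket_proj w s r b)) else 0)"
    if "s < 2" "t < 2" for s t
    using meas_channel_kron[OF one_carrier_mat psd_carrier[OF \<sigma>p] that] \<open>mtrace \<sigma> = 1\<close> by simp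
  have "(\<Sum>r<dA. \<Sum>a<dA. \<Sum>b<dA. ket_proj w 0 r a * 1\<^sub>m dA $$ (a, b) * cnj (ket_proj w 0 r b)) =
      (\<Sum>r<dA. \<Sum>a<dA. \<Sum>b<dA. if b = a then ket_proj w 0 r a * cnj (ket_proj w 0 r b) else 0)"
    by (intro sum.cong refl) auto
  also have "\<dots> = (\<Sum>r<dA. \<Sum>a<dA. (w r * cnj (w r)) * (w a * cnj (w a)))"
    by (intro sum.cong refl) (simp add: ket_proj_def ac_simps)
  also have "\<dots> = 1" using norm by (simp flip: sum_distrib_left)
  finally have E00: "?E ?T $$ (0, 0) = 1" using entry[of 0 0] by simp
  have "psd 2 (?E ?T)" by (rule psd_cptp[OF cptp_meas_channel[OF norm] psd_kron_one[OF \<sigma>p]])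
  then have "psd 1 (mat 1 1 (\<lambda>_. ?E ?T $$ (1, 1)))" using psd_diag_nonneg[of 2] psd_1x1 by simp
  moreover have "?E ?T = dsum (1\<^sub>m 1) (mat 1 1 (\<lambda>_. ?E ?T $$ (1, 1)))"
    using mat_2x2_eq_dsum[OF ETc] entry[of 0 1] entry[of 1 0] E00 mat_1x1_one by simp
  ultimately show ?thesis by (rule that)
qed

lemma rel_K_entropy_pure_product_nonneg:
  assumes DK: "rel_K_entropy b D" and \<psi>: "\<psi> \<in> carrier_vec dA"
    and norm: "(\<Sum>i<dA. \<psi> $ i * cnj (\<psi> $ i)) = 1" and \<rho>: "density dB \<rho>" and \<sigma>: "density dB \<sigma>"
  shows "0 \<le> D (kron (ketbra \<psi>) \<rho>) (kron (1\<^sub>m dA) \<sigma>)"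
proof -
  let ?S = "kron (ketbra \<psi>) \<rho>" and ?T = "kron (1\<^sub>m dA) \<sigma>"
  let ?E = "meas_channel dA dB (($) \<psi>)"
  have S: "density (dA * dB) ?S" by (rule density_kron_ketbra[OF \<psi> norm \<rho>])
  have T: "psd (dA * dB) ?T" using \<sigma> unfolding density_def by (simp add: psd_kron_one)
  obtain c where c: "psd 1 c" and ET: "?E ?T = dsum (1\<^sub>m 1) c"
    using meas_channel_kron_one[OF norm \<sigma>] .
  have one: "psd 1 (1\<^sub>m 1)" using density_one_1x1 unfolding density_def by simp
  have "D (?E ?S) (?E ?T) = 0"
    unfolding meas_channel_kron_ketbra[OF \<psi> norm \<rho>] ET
    using rel_K_entropy_dsum_zero[OF DK _ one one c] rel_K_entropy_self[OF DK density_one_1x1] by simp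
  moreover have "D (?E ?S) (?E ?T) \<le> D ?S ?T"
    using S T unfolding density_def
    by (intro rel_K_entropy_monotone[OF DK density_dim_pos[OF S] cptp_meas_channel[OF norm]]) simp_all
  ultimately show ?thesis by simp
qed

lemma rel_K_entropy_pure_product_nonpos:
  assumes DK: "rel_K_entropy b D" and \<psi>: "\<psi> \<in> carrier_vec dA"
    and norm: "(\<Sum>i<dA. \<psi> $ i * cnj (\<psi> $ i)) = 1" and \<rho>: "density dB \<rho>"
  shows "D (kron (ketbra \<psi>) \<rho>) (kron (1\<^sub>m dA) \<rho>) \<le> 0"
proof -
  let ?P = "proj_mat dA (($) \<psi>)"
  have \<rho>p: "psd dB \<rho>" using \<rho> unfolding density_def by simp
  have S: "density (dA * dB) (kron (?P 0) \<rho>)"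
    using density_kron_ketbra[OF \<psi> norm \<rho>] unfolding ketbra_eq_proj_mat[OF \<psi>] .
  have "kron (1\<^sub>m dA) \<rho> = kron (?P 0) \<rho> + kron (?P 1) \<rho>"
    unfolding one_mat_eq_proj_mat_add[of dA "($) \<psi>"]
    by (rule kron_add_left[OF proj_mat_carrier proj_mat_carrier psd_carrier[OF \<rho>p]])
  then have "D (kron (?P 0) \<rho>) (kron (1\<^sub>m dA) \<rho>) \<le> D (kron (?P 0) \<rho>) (kron (?P 0) \<rho>)"
    using S psd_kron_proj_mat[OF norm \<rho>p] unfolding density_def
    by (simp add: rel_K_entropy_antimono_right[OF DK density_dim_pos[OF S]])
  also have "\<dots> = 0" by (rule rel_K_entropy_self[OF DK S])
  finally show ?thesis unfolding ketbra_eq_proj_mat[OF \<psi>] .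
qed

subsection \<open>The conditional K-entropy\<close>

lemma condK_pure_product:
  assumes DK: "rel_K_entropy b D" and HK: "H = condK1 D \<or> H = condK2 D"
    and \<psi>: "\<psi> \<in> carrier_vec dA" and norm: "(\<Sum>i<dA. (cmod (\<psi> $ i))\<^sup>2) = 1" and \<rho>: "density dB \<rho>"
  shows "H dA dB (kron (ketbra \<psi>) \<rho>) = 0"
proof -
  have norm': "(\<Sum>i<dA. \<psi> $ i * cnj (\<psi> $ i)) = 1" using norm by (simp add: sum_mult_cnj_eq)
  let ?S = "kron (ketbra \<psi>) \<rho>"
  have ge: "0 \<le> D ?S (kron (1\<^sub>m dA) \<sigma>)" if "density dB \<sigma>" for \<sigma>
    by (rule rel_K_entropy_pure_product_nonneg[OF DK \<psi> norm' \<rho> that])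
  have eq: "D ?S (kron (1\<^sub>m dA) \<rho>) = 0"
    using ge[OF \<rho>] rel_K_entropy_pure_product_nonpos[OF DK \<psi> norm' \<rho>] by simp
  from HK show ?thesis
  proof
    assume "H = condK1 D"
    have \<rho>c: "\<rho> \<in> carrier_mat dB dB" using \<rho> unfolding density_def by (simp add: psd_carrier)
    have "ptrace_A dA dB ?S = \<rho>"
      unfolding ptrace_A_kron[OF ketbra_carrier[OF \<psi>] \<rho>c] mtrace_ketbra[OF \<psi>] norm'
      using \<rho>c by (intro eq_matI) auto
    then show ?thesis unfolding \<open>H = condK1 D\<close> condK1_def using eq by simp
  next
    assume "H = condK2 D"
    have "(SUP \<sigma> \<in> {\<sigma>. density dB \<sigma>}. - D ?S (kron (1\<^sub>m dA) \<sigma>)) \<le> 0"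
      using ge by (intro SUP_least) (simp add: ereal_uminus_le_reorder)
    moreover have "0 \<le> (SUP \<sigma> \<in> {\<sigma>. density dB \<sigma>}. - D ?S (kron (1\<^sub>m dA) \<sigma>))"
      using \<rho> eq by (intro SUP_upper2[of \<rho>]) auto
    ultimately show ?thesis unfolding \<open>H = condK2 D\<close> condK2_def by simp
  qed
qed

lemma condK_le_log_dim:
  assumes DK: "rel_K_entropy b D" and HK: "H = condK1 D \<or> H = condK2 D"
    and "0 < dA" and \<rho>: "density (dA * dB) \<rho>"
  shows "H dA dB \<rho> \<le> ereal (log b (real dA))"
proof -
  have bound: "- D \<rho> (kron (1\<^sub>m dA) \<sigma>) \<le> ereal (log b (real dA))" if \<sigma>: "density dB \<sigma>" for \<sigma>
  proof -
    have \<sigma>p: "psd dB \<sigma>" and "mtrace \<sigma> = 1" using \<sigma> unfolding density_def by auto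
    then have "mtrace (kron (1\<^sub>m dA) \<sigma>) = complex_of_real (real dA)"
      using mtrace_kron[OF one_carrier_mat psd_carrier[OF \<sigma>p]] by (simp add: mtrace_def)
    then have "ereal (log b (1 / real dA)) \<le> D \<rho> (kron (1\<^sub>m dA) \<sigma>)"
      using rel_K_entropy_ge_log_trace[OF DK \<rho> psd_kron_one[OF \<sigma>p]] \<open>0 < dA\<close> by simp
    then show ?thesis by (simp add: log_recip ereal_uminus_le_reorder)
  qed
  from HK show ?thesis
  proof
    assume "H = condK1 D"
    then show ?thesis
      unfolding condK1_def using bound[OF density_cptp[OF cptp_ptrace_A \<rho>]] by simp
  next
    assume "H = condK2 D"
    then show ?thesis unfolding condK2_def using bound by (auto intro: SUP_least)
  qed
qed

theorem lemma9:
  fixes b :: real and D :: "complex mat \<Rightarrow> complex mat \<Rightarrow> ereal"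
    and H :: "nat \<Rightarrow> nat \<Rightarrow> complex mat \<Rightarrow> ereal"
  assumes base: "0 < b" "b \<noteq> 1"
    and DK: "rel_K_entropy b D"
    and HK: "H = condK1 D \<or> H = condK2 D"
  shows "(\<forall>dA dB (\<psi>::complex vec) \<rho>B.
            \<psi> \<in> carrier_vec dA \<longrightarrow> (\<Sum>i<dA. (cmod (\<psi> $ i))\<^sup>2) = 1 \<longrightarrow> density dB \<rho>B \<longrightarrow>
            H dA dB (kron (ketbra \<psi>) \<rho>B) = 0)
       \<and> (\<forall>dA dB \<rho>. 0 < dA \<longrightarrow> 0 < dB \<longrightarrow> density (dA * dB) \<rho> \<longrightarrow>
            H dA dB \<rho> \<le> ereal (log b (real dA)))"
  using condK_pure_product[OF DK HK] condK_le_log_dim[OF DK HK] by blast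

end
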